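(* Let $D$ be a dataset, $\Omega=\{\omega_1,\dots,\omega_k\}$ a finite set of outcomes, $q$ a real-valued quality function with sensitivity $\Delta>0$, and $\varepsilon>0$; let $q_*=\max_i q(D,\omega_i)$. Then the output distributions of the Permute-and-Flip mechanism and of Intermediate Algorithm A (both defined below) on these inputs are the same.
   Context: $\mathrm{Expo}(\lambda)$ denotes the exponential distribution with rate $\lambda$, density $\lambda e^{-\lambda x}\mathbf{1}[x\ge0]$. $\mathrm{Bernoulli}(p)$ equals $1$ with probability $p$. Permute-and-Flip: compute $q_*$; draw a uniformly random permutation $\pi$ of $\{1,\dots,k\}$; for $j=1,\dots,k$ in order, let $r=\pi(j)$, $p=\exp\left(\frac{\varepsilon}{2\Delta}(q(D,\omega_r)-q_* )\right)$, and flip an independent $\mathrm{Bernoulli}(p)$ coin; if it equals $1$, return $r$ and stop. Intermediate Algorithm A: compute $q_*$; for each $i=1,\dots,k$ independently set $v_i=q(D,\omega_i)+X_i$ with $X_i\sim\mathrm{Expo}(\varepsilon/(2\Delta))$; let $S=\{i: v_i\ge q_*\}$ (nonempty, since it contains any index attaining $q_*$); return an element of $S$ chosen uniformly at random. *)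

theory Defs
  imports "HOL-Probability.Probability"
begin

definition q_star :: "('d \<Rightarrow> 'o \<Rightarrow> real) \<Rightarrow> 'd \<Rightarrow> (nat \<Rightarrow> 'o) \<Rightarrow> nat \<Rightarrow> real" where
  "q_star q D omega k = Max ((\<lambda>i. q D (omega i)) ` {1..k})"

text \<open>The empty-list case is never reached
  (an index attaining q_star has p = 1); it returns 0 by convention.\<close>
fun pf_scan :: "(nat \<Rightarrow> real) \<Rightarrow> nat list \<Rightarrow> nat pmf" where
  "pf_scan p [] = return_pmf 0"
| "pf_scan p (r # rs) =
     bernoulli_pmf (p r) \<bind> (\<lambda>b. if b then return_pmf r else pf_scan p rs)"

definition permute_and_flip ::
  "('d \<Rightarrow> 'o \<Rightarrow> real) \<Rightarrow> 'd \<Rightarrow> (nat \<Rightarrow> 'o) \<Rightarrow> nat \<Rightarrow> real \<Rightarrow> real \<Rightarrow> nat pmf" where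
  "permute_and_flip q D omega k \<epsilon> \<Delta> =
     pmf_of_set (permutations_of_set {1..k}) \<bind>
       pf_scan (\<lambda>r. exp (\<epsilon> / (2 * \<Delta>) * (q D (omega r) - q_star q D omega k)))"

definition expo_noise :: "real \<Rightarrow> nat \<Rightarrow> (nat \<Rightarrow> real) measure" where
  "expo_noise rate k = PiM {1..k} (\<lambda>i. density lborel (exponential_density rate))"

definition algorithm_A ::
  "('d \<Rightarrow> 'o \<Rightarrow> real) \<Rightarrow> 'd \<Rightarrow> (nat \<Rightarrow> 'o) \<Rightarrow> nat \<Rightarrow> real \<Rightarrow> real \<Rightarrow> nat measure" where
  "algorithm_A q D omega k \<epsilon> \<Delta> =
     expo_noise (\<epsilon> / (2 * \<Delta>)) k \<bind>
       (\<lambda>X. measure_pmf (pmf_of_set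
              {i \<in> {1..k}. q D (omega i) + X i \<ge> q_star q D omega k}))"

end

theory Submission
  imports Defs
begin

text \<open>Both mechanisms draw a random set \<open>T \<subseteq> {1..k}\<close> that contains each \<open>i\<close> independently
  with probability \<open>p i = exp (\<epsilon> / (2 * \<Delta>) * (q D (omega i) - q_star))\<close> and then return a uniform
  element of \<open>T\<close>. For Algorithm A, \<open>T\<close> is the set of \<open>i\<close> with \<open>X i \<ge> q_star - q D (omega i)\<close>,
  and an \<open>Expo(\<lambda>)\<close> variable exceeds \<open>c \<ge> 0\<close> with probability \<open>exp (- \<lambda> * c)\<close>.
  For Permute-and-Flip, toss all \<open>k\<close> coins in advance: the output is the first element of the
  random permutation whose coin shows heads, and by a resampling argument the first element of a
  uniform random permutation of \<open>A\<close> that lies in a nonempty \<open>T \<subseteq> A\<close> is uniform on \<open>T\<close>.\<close>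

definition independent_subset_pmf :: "'a set \<Rightarrow> ('a \<Rightarrow> real) \<Rightarrow> 'a set pmf" where
  "independent_subset_pmf A p = map_pmf (\<lambda>b. {x. b x}) (Pi_pmf A False (\<lambda>x. bernoulli_pmf (p x)))"

lemma independent_subset_pmf_cong:
  "(\<And>x. x \<in> A \<Longrightarrow> p x = p' x) \<Longrightarrow> independent_subset_pmf A p = independent_subset_pmf A p'"
  unfolding independent_subset_pmf_def by (simp cong: Pi_pmf_cong)

lemma bind_pmf_of_set_resample:
  assumes "finite A" "B \<subseteq> A" "B \<noteq> {}"
  shows "pmf_of_set A \<bind> (\<lambda>x. if x \<in> B then return_pmf x else pmf_of_set B) = pmf_of_set B"
proof (rule pmf_eqI)
  fix r
  have B: "finite B" "card B > 0" "card B + card (A - B) = card A" "A \<noteq> {}"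
    using assms by (auto simp: finite_subset card_gt_0_iff card_Diff_subset card_mono)
  have "(\<Sum>x\<in>A. pmf (if x \<in> B then return_pmf x else pmf_of_set B) r)
      = indicator B r + real (card (A - B)) * pmf (pmf_of_set B) r"
    using assms B
    by (simp add: sum.subset_diff[OF assms(2,1)] pmf_return indicator_def add.commute)
  also have "\<dots> = real (card A) * pmf (pmf_of_set B) r"
    using B assms(3)
    by (simp add: pmf_of_set indicator_def of_nat_add[symmetric] field_simps del: of_nat_add)
  finally show "pmf (pmf_of_set A \<bind> (\<lambda>x. if x \<in> B then return_pmf x else pmf_of_set B)) r
      = pmf (pmf_of_set B) r"
    using assms B by (simp add: pmf_bind_pmf_of_set)
qed

lemma find_random_permutation:
  assumes "finite A" "\<exists>x\<in>A. P x"
  shows "map_pmf (find P) (pmf_of_set (permutations_of_set A)) = map_pmf Some (pmf_of_set {x\<in>A. P x})"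
  using assms
proof (induction "card A" arbitrary: A)
  case 0
  then show ?case by simp
next
  case (Suc n)
  define B where "B = {x\<in>A. P x}"
  have A: "A \<noteq> {}" "B \<subseteq> A" "B \<noteq> {}" using Suc.prems by (auto simp: B_def)
  have "map_pmf (find P) (pmf_of_set (permutations_of_set A))
      = pmf_of_set A \<bind> (\<lambda>x. map_pmf (\<lambda>xs. find P (x # xs)) (pmf_of_set (permutations_of_set (A - {x}))))"
    using Suc.prems A
    by (simp add: random_permutation_of_set map_bind_pmf map_pmf_def[symmetric] map_pmf_comp)
  also have "\<dots> = pmf_of_set A \<bind> (\<lambda>x. map_pmf Some (if x \<in> B then return_pmf x else pmf_of_set B))"
  proof (intro bind_pmf_cong refl)
    fix x assume "x \<in> set_pmf (pmf_of_set A)"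
    then have x: "x \<in> A" using Suc.prems A by simp
    show "map_pmf (\<lambda>xs. find P (x # xs)) (pmf_of_set (permutations_of_set (A - {x})))
        = map_pmf Some (if x \<in> B then return_pmf x else pmf_of_set B)"
    proof (cases "P x")
      case False
      then have "{y\<in>A - {x}. P y} = B" by (auto simp: B_def)
      moreover have "n = card (A - {x})" using Suc x by simp
      ultimately show ?thesis
        using Suc.hyps(1)[of "A - {x}"] Suc.prems False A by (auto simp: B_def o_def)
    qed (simp add: B_def x)
  qed
  also have "\<dots> = map_pmf Some (pmf_of_set B)"
    using Suc.prems A by (simp add: map_bind_pmf[symmetric] bind_pmf_of_set_resample)
  finally show ?case by (simp add: B_def)
qed

lemma pf_scan_eq_map_Pi_pmf:
  assumes "distinct xs"
  shows "pf_scan p xs = map_pmf (\<lambda>b. case find b xs of None \<Rightarrow> 0 | Some r \<Rightarrow> r)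
                          (Pi_pmf (set xs) False (\<lambda>i. bernoulli_pmf (p i)))"
  using assms
proof (induction xs)
  case (Cons x xs)
  let ?\<Pi> = "Pi_pmf (set xs) False (\<lambda>i. bernoulli_pmf (p i))"
  let ?first = "\<lambda>b xs. case find b xs of None \<Rightarrow> 0 | Some r \<Rightarrow> r"
  have find_upd: "find (f(x := y)) xs = find f xs" for f y
    using Cons.prems by (induction xs) auto
  have "pf_scan p (x # xs) = bernoulli_pmf (p x) \<bind> (\<lambda>y. map_pmf (\<lambda>f. ?first (f(x := y)) (x # xs)) ?\<Pi>)"
    using Cons unfolding pf_scan.simps by (intro bind_pmf_cong refl) (simp add: find_upd map_pmf_const)
  also have "\<dots> = map_pmf (\<lambda>b. ?first b (x # xs)) (Pi_pmf (set (x # xs)) False (\<lambda>i. bernoulli_pmf (p i)))"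
    using Cons.prems by (simp add: Pi_pmf_insert' map_bind_pmf map_pmf_def[symmetric] map_pmf_comp)
  finally show ?case .
qed simp

lemma random_permutation_bind_pf_scan:
  assumes "finite A" "x0 \<in> A" "p x0 = 1"
  shows "pmf_of_set (permutations_of_set A) \<bind> pf_scan p = independent_subset_pmf A p \<bind> pmf_of_set"
proof -
  let ?\<Pi> = "Pi_pmf A False (\<lambda>i. bernoulli_pmf (p i))"
  let ?first = "\<lambda>b xs. case find b xs of None \<Rightarrow> 0 | Some r \<Rightarrow> r"
  have "pmf_of_set (permutations_of_set A) \<bind> pf_scan p
      = pmf_of_set (permutations_of_set A) \<bind> (\<lambda>xs. map_pmf (\<lambda>b. ?first b xs) ?\<Pi>)"
  proof (intro bind_pmf_cong refl)
    fix xs assume "xs \<in> set_pmf (pmf_of_set (permutations_of_set A))"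
    then have "xs \<in> permutations_of_set A" using assms(1) by simp
    then show "pf_scan p xs = map_pmf (\<lambda>b. ?first b xs) ?\<Pi>"
      using permutations_of_setD[of xs A] by (simp add: pf_scan_eq_map_Pi_pmf)
  qed
  also have "\<dots> = ?\<Pi> \<bind> (\<lambda>b. map_pmf (?first b) (pmf_of_set (permutations_of_set A)))"
    unfolding map_pmf_def by (rule bind_commute_pmf)
  also have "\<dots> = ?\<Pi> \<bind> (\<lambda>b. pmf_of_set {x. b x})"
  proof (intro bind_pmf_cong refl)
    fix b assume "b \<in> set_pmf ?\<Pi>"
    then have b: "b \<in> PiE_dflt A False (\<lambda>i. set_pmf (bernoulli_pmf (p i)))"
      using set_Pi_pmf_subset'[OF assms(1), of False "\<lambda>i. bernoulli_pmf (p i)"] by (auto simp: o_def)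
    then have "b x0 \<in> set_pmf (bernoulli_pmf 1)" using assms(2,3) by (auto simp: PiE_dflt_def)
    then have "b x0" by (cases "b x0") (simp_all add: set_pmf_iff)
    moreover have "{x. b x} = {x\<in>A. b x}" using b by (auto simp: PiE_dflt_def)
    ultimately have "map_pmf (find b) (pmf_of_set (permutations_of_set A)) = map_pmf Some (pmf_of_set {x. b x})"
      using find_random_permutation[OF assms(1), of b] assms(2) by auto
    then have "map_pmf (case_option 0 (\<lambda>r. r)) (map_pmf (find b) (pmf_of_set (permutations_of_set A)))
        = pmf_of_set {x. b x}"
      by (simp add: map_pmf_comp o_def)
    then show "map_pmf (?first b) (pmf_of_set (permutations_of_set A)) = pmf_of_set {x. b x}"
      by (simp only: map_pmf_comp o_def)
  qed
  finally show ?thesis by (simp add: independent_subset_pmf_def bind_map_pmf)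
qed

lemma vimage_Collect_mem_PiM:
  assumes "T \<subseteq> A" "\<And>i. i \<in> A \<Longrightarrow> E i \<subseteq> space (M i)"
  shows "(\<lambda>X. {i\<in>A. X i \<in> E i}) -` {T} \<inter> space (PiM A M)
       = PiE A (\<lambda>i. if i \<in> T then E i else space (M i) - E i)"
proof (rule set_eqI)
  fix X
  have "{i\<in>A. X i \<in> E i} = T \<longleftrightarrow> (\<forall>i\<in>A. X i \<in> E i \<longleftrightarrow> i \<in> T)"
    using assms(1) by blast
  then show "X \<in> (\<lambda>X. {i\<in>A. X i \<in> E i}) -` {T} \<inter> space (PiM A M)
      \<longleftrightarrow> X \<in> PiE A (\<lambda>i. if i \<in> T then E i else space (M i) - E i)"
    using assms(2) by (auto simp: space_PiM PiE_iff split: if_splits)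
qed

lemma measurable_Collect_mem_PiM:
  assumes "finite A" "\<And>i. i \<in> A \<Longrightarrow> E i \<in> sets (M i)"
  shows "(\<lambda>X. {i\<in>A. X i \<in> E i}) \<in> PiM A M \<rightarrow>\<^sub>M count_space UNIV"
proof -
  have "(\<lambda>X. {i\<in>A. X i \<in> E i}) -` {T} \<inter> space (PiM A M) \<in> sets (PiM A M)" if "T \<subseteq> A" for T
  proof -
    have "(\<lambda>X. {i\<in>A. X i \<in> E i}) -` {T} \<inter> space (PiM A M)
        = PiE A (\<lambda>i. if i \<in> T then E i else space (M i) - E i)"
      using that sets.sets_into_space[OF assms(2)] by (rule vimage_Collect_mem_PiM)
    also have "\<dots> \<in> sets (PiM A M)"
      using assms by (intro sets_PiM_I_finite) auto
    finally show ?thesis .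
  qed
  then have "(\<lambda>X. {i\<in>A. X i \<in> E i}) \<in> PiM A M \<rightarrow>\<^sub>M count_space (Pow A)"
    using assms(1) by (subst measurable_count_space_eq2) auto
  then show ?thesis
    by (rule measurable_compose[OF _ measurable_count_space_eq1[THEN iffD2]]) auto
qed

lemma distr_PiM_Collect_mem:
  assumes "finite A" "\<And>i. prob_space (M i)" "\<And>i. i \<in> A \<Longrightarrow> E i \<in> sets (M i)"
  shows "distr (PiM A M) (count_space UNIV) (\<lambda>X. {i\<in>A. X i \<in> E i})
       = measure_pmf (independent_subset_pmf A (\<lambda>i. measure (M i) (E i)))"
proof (rule measure_eqI_countable_AE[where \<Omega> = "Pow A"])
  interpret product_prob_space M
    unfolding product_prob_space_def product_prob_space_axioms_def product_sigma_finite_def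
    using assms(2) by (simp add: prob_space_imp_sigma_finite)
  let ?S = "\<lambda>X. {i\<in>A. X i \<in> E i}"
  let ?P = "\<lambda>T. \<Prod>i\<in>A. if i \<in> T then measure (M i) (E i) else 1 - measure (M i) (E i)"
  have S: "?S \<in> PiM A M \<rightarrow>\<^sub>M count_space UNIV"
    using assms(1,3) by (rule measurable_Collect_mem_PiM)
  show "AE T in distr (PiM A M) (count_space UNIV) ?S. T \<in> Pow A"
    using S by (subst AE_distr_iff) auto
  show "AE T in independent_subset_pmf A (\<lambda>i. measure (M i) (E i)). T \<in> Pow A"
    using set_Pi_pmf_subset[OF assms(1), of False "\<lambda>i. bernoulli_pmf (measure (M i) (E i))"]
    by (auto simp: AE_measure_pmf_iff independent_subset_pmf_def)
  fix T assume "T \<in> Pow A"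
  then have T: "T \<subseteq> A" by simp
  have "?S -` {T} \<inter> space (PiM A M) = PiE A (\<lambda>i. if i \<in> T then E i else space (M i) - E i)"
    using T sets.sets_into_space[OF assms(3)] by (rule vimage_Collect_mem_PiM)
  then have "emeasure (distr (PiM A M) (count_space UNIV) ?S) {T}
      = (\<Prod>i\<in>A. emeasure (M i) (if i \<in> T then E i else space (M i) - E i))"
    using S assms(1,3) by (simp add: emeasure_distr) (rule emeasure_PiM, auto)
  also have "\<dots> = (\<Prod>i\<in>A. ennreal (if i \<in> T then measure (M i) (E i) else 1 - measure (M i) (E i)))"
    using assms(3) by (intro prod.cong refl) (simp add: M.emeasure_eq_measure M.prob_compl)
  also have "\<dots> = ennreal (?P T)"
    by (rule prod_ennreal) (simp add: M.prob_le_1)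
  also have "\<dots> = emeasure (independent_subset_pmf A (\<lambda>i. measure (M i) (E i))) {T}"
  proof -
    have "(\<lambda>b. {i. b i}) -` {T} = PiE_dflt A False (\<lambda>i. {i \<in> T})"
      using T by (auto simp: PiE_dflt_def)
    then have "measure (independent_subset_pmf A (\<lambda>i. measure (M i) (E i))) {T}
        = (\<Prod>i\<in>A. measure (bernoulli_pmf (measure (M i) (E i))) {i \<in> T})"
      unfolding independent_subset_pmf_def measure_map_pmf by (simp add: measure_Pi_pmf_PiE_dflt assms(1))
    also have "\<dots> = ?P T"
      by (intro prod.cong refl) (simp add: measure_pmf_single M.prob_le_1)
    finally show ?thesis
      by (simp add: measure_pmf.emeasure_eq_measure)
  qed
  finally show "emeasure (distr (PiM A M) (count_space UNIV) ?S) {T}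
      = emeasure (independent_subset_pmf A (\<lambda>i. measure (M i) (E i))) {T}" .
qed (auto simp: countable_finite assms(1))

lemma measure_exponential_density_atLeast:
  assumes "0 < l" "0 \<le> c"
  shows "measure (density lborel (exponential_density l)) {c..} = exp (- c * l)"
proof -
  let ?D = "density lborel (exponential_density l)"
  interpret prob_space ?D using assms(1) by (rule prob_space_exponential_density)
  have "emeasure ?D {..<c} = emeasure ?D {..c}"
    using AE_lborel_singleton[of c] by (simp add: emeasure_density)
      (auto intro!: nn_integral_cong_AE elim!: eventually_mono simp: indicator_def)
  also have "\<dots> = 1 - exp (- c * l)"
    using emeasure_erlang_density[OF assms(1), of 0 c] assms by (simp add: erlang_CDF_0 mult.commute)
  finally have "prob {..<c} = 1 - exp (- c * l)"
    using assms by (simp add: emeasure_eq_measure)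
  moreover have "prob {c..} = 1 - prob {..<c}"
    using prob_compl[of "{..<c}"] by (simp add: Compl_eq_Diff_UNIV[symmetric] not_less)
  ultimately show ?thesis by simp
qed

lemma expo_noise_bind_threshold:
  assumes "0 < l" "\<And>i. i \<in> {1..k} \<Longrightarrow> a i \<le> t"
  shows "expo_noise l k \<bind> (\<lambda>X. measure_pmf (pmf_of_set {i\<in>{1..k}. t \<le> a i + X i}))
       = measure_pmf (independent_subset_pmf {1..k} (\<lambda>i. exp (l * (a i - t))) \<bind> pmf_of_set)"
proof -
  let ?S = "\<lambda>X. {i\<in>{1..k}. X i \<in> {t - a i..}}"
  have S: "?S \<in> expo_noise l k \<rightarrow>\<^sub>M count_space UNIV"
    unfolding expo_noise_def by (rule measurable_Collect_mem_PiM) auto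
  have pmf_of_set: "(\<lambda>T. measure_pmf (pmf_of_set T)) \<in> count_space UNIV \<rightarrow>\<^sub>M subprob_algebra (count_space UNIV)"
    by (simp add: measure_pmf_in_subprob_algebra)
  have nonempty: "space (expo_noise l k) \<noteq> {}"
    by (simp add: expo_noise_def space_PiM PiE_eq_empty_iff)
  have "expo_noise l k \<bind> (\<lambda>X. measure_pmf (pmf_of_set {i\<in>{1..k}. t \<le> a i + X i}))
      = expo_noise l k \<bind> (\<lambda>X. measure_pmf (pmf_of_set (?S X)))"
    by (simp add: diff_le_eq add.commute)
  also have "\<dots> = distr (expo_noise l k) (count_space UNIV) ?S \<bind> (\<lambda>T. measure_pmf (pmf_of_set T))"
    using S pmf_of_set nonempty by (rule bind_distr[symmetric])
  also have "distr (expo_noise l k) (count_space UNIV) ?S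
      = measure_pmf (independent_subset_pmf {1..k}
          (\<lambda>i. measure (density lborel (exponential_density l)) {t - a i..}))"
    unfolding expo_noise_def using assms(1)
    by (intro distr_PiM_Collect_mem) (auto simp: prob_space_exponential_density)
  also have "independent_subset_pmf {1..k} (\<lambda>i. measure (density lborel (exponential_density l)) {t - a i..})
      = independent_subset_pmf {1..k} (\<lambda>i. exp (l * (a i - t)))"
    using assms by (intro independent_subset_pmf_cong) (simp add: measure_exponential_density_atLeast algebra_simps)
  finally show ?thesis by (simp add: measure_pmf_bind)
qed

theorem lemma1:
  fixes q :: "'d \<Rightarrow> 'o \<Rightarrow> real" and D :: 'd and omega :: "nat \<Rightarrow> 'o"
    and neighbor :: "'d \<Rightarrow> 'd \<Rightarrow> bool" and k :: nat and \<epsilon> \<Delta> :: real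
  assumes "k \<ge> 1"
    and "inj_on omega {1..k}"
    and "\<Delta> > 0"
    and "\<forall>D1 D2 w. neighbor D1 D2 \<longrightarrow> \<bar>q D1 w - q D2 w\<bar> \<le> \<Delta>"
    and "\<epsilon> > 0"
  shows "measure_pmf (permute_and_flip q D omega k \<epsilon> \<Delta>) = algorithm_A q D omega k \<epsilon> \<Delta>"
proof -
  define l where "l = \<epsilon> / (2 * \<Delta>)"
  define a where "a i = q D (omega i)" for i
  define t where "t = q_star q D omega k"
  have t: "t = Max (a ` {1..k})"
    by (simp add: t_def a_def q_star_def)
  then have a_le: "a i \<le> t" if "i \<in> {1..k}" for i
    using that by simp
  obtain i0 where i0: "i0 \<in> {1..k}" "a i0 = t"
    using Max_in[of "a ` {1..k}"] t assms(1) by fastforce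
  have "permute_and_flip q D omega k \<epsilon> \<Delta>
      = pmf_of_set (permutations_of_set {1..k}) \<bind> pf_scan (\<lambda>i. exp (l * (a i - t)))"
    by (simp add: permute_and_flip_def l_def a_def t_def)
  also have "\<dots> = independent_subset_pmf {1..k} (\<lambda>i. exp (l * (a i - t))) \<bind> pmf_of_set"
    using i0 by (intro random_permutation_bind_pf_scan) auto
  finally have permute_and_flip: "permute_and_flip q D omega k \<epsilon> \<Delta>
      = independent_subset_pmf {1..k} (\<lambda>i. exp (l * (a i - t))) \<bind> pmf_of_set" .
  have "algorithm_A q D omega k \<epsilon> \<Delta>
      = expo_noise l k \<bind> (\<lambda>X. measure_pmf (pmf_of_set {i\<in>{1..k}. t \<le> a i + X i}))"
    by (simp add: algorithm_A_def l_def a_def t_def)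
  also have "\<dots> = measure_pmf (independent_subset_pmf {1..k} (\<lambda>i. exp (l * (a i - t))) \<bind> pmf_of_set)"
    using assms(3,5) a_le by (intro expo_noise_bind_threshold) (simp_all add: l_def)
  finally show ?thesis
    by (simp add: permute_and_flip)
qed

end
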